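(* Let $(X_n)_{n\ge1}$ be a sequence of finite sets and $(a_n(q))$ a $q$-Euler–Gauss sequence. Let $n\ge1$ be such that $a_d(1)\neq0$ for every divisor $d$ of $n$ for which $n/d$ is not a prime power. If $|X_d|=a_d(1)$ for all $d\mid n$ and $\mathbb{Z}_n$ acts on $X_n$ so that $|X_n^i|=|X_{\gcd(n,i)}|$ for all $i\in\mathbb{Z}_n$, then the triple $(X_n,\mathbb{Z}_n,a_n(q))$ exhibits the cyclic sieving phenomenon.
   Context: $\mu$ is the Möbius function, $[n]_q=1+q+\dots+q^{n-1}$; polynomial congruences modulo $[n]_q$ mean divisibility of the difference by $[n]_q$ in $\mathbb{Z}[q]$. A sequence $(a_n(q))$ in $\mathbb{Z}[q]$ is a $q$-Euler–Gauss sequence if for all $n\ge1$, $\prod_{d\mid n,\,\mu(d)=1}a_{n/d}(q^d)\equiv\prod_{d\mid n,\,\mu(d)=-1}a_{n/d}(q^d)\pmod{[n]_q}$. Here "$n/d$ is not a prime power" means $n/d$ has at least two distinct prime divisors ($1=p^0$ counts as a prime power). $\mathbb{Z}_n$ is the additive group of integers mod $n$, elements $i$ identified with integer representatives; $X_n^i$ is the fixed point set of $i$. A triple $(X,\mathbb{Z}_n,f(q))$ exhibits the cyclic sieving phenomenon if $|X^i|=f(\omega_n^i)$ for all $i\in\mathbb{Z}_n$, where $\omega_n$ is a primitive $n$-th root of unity. *)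

theory Defs
  imports Complex_Main "HOL-Computational_Algebra.Polynomial" "HOL-Computational_Algebra.Squarefree"
    "HOL-Algebra.Elementary_Groups" "HOL-Algebra.Group_Action"
begin

definition mu :: "nat \<Rightarrow> int" where
  "mu d = (if squarefree d then (-1) ^ card (prime_factors d) else 0)"

definition q_int :: "nat \<Rightarrow> int poly" where
  "q_int n = (\<Sum>i<n. monom 1 i)"

definition subst_pow :: "int poly \<Rightarrow> nat \<Rightarrow> int poly" where
  "subst_pow p d = pcompose p (monom 1 d)"

definition q_euler_gauss :: "(nat \<Rightarrow> int poly) \<Rightarrow> bool" where
  "q_euler_gauss a \<longleftrightarrow> (\<forall>n\<ge>1.
     q_int n dvd
       ((\<Prod>d\<in>{d. d dvd n \<and> mu d = 1}. subst_pow (a (n div d)) d)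
        - (\<Prod>d\<in>{d. d dvd n \<and> mu d = -1}. subst_pow (a (n div d)) d)))"

text \<open>m is a prime power (1 = p^0 counts) iff it has at most one prime divisor.\<close>
definition prime_power_or_one :: "nat \<Rightarrow> bool" where
  "prime_power_or_one m \<longleftrightarrow> card (prime_factors m) \<le> 1"

definition fixpts :: "'b set \<Rightarrow> (int \<Rightarrow> 'b \<Rightarrow> 'b) \<Rightarrow> int \<Rightarrow> 'b set" where
  "fixpts X phi i = {x \<in> X. phi i x = x}"

text \<open>Cyclic sieving for Z_n (as integer_mod_group n, carrier {0..<n}),
  with omega_n = exp(2 pi i / n).\<close>
definition cyclic_sieving :: "'b set \<Rightarrow> nat \<Rightarrow> (int \<Rightarrow> 'b \<Rightarrow> 'b) \<Rightarrow> int poly \<Rightarrow> bool" where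
  "cyclic_sieving X n phi f \<longleftrightarrow>
     (\<forall>i \<in> carrier (integer_mod_group n).
        complex_of_nat (card (fixpts X phi i)) =
        poly (map_poly of_int f) (exp (2 * pi * \<i> / of_nat n) ^ nat i))"

end

theory Submission imports Defs "HOL-Analysis.Complex_Transcendental" begin

text \<open>The heart of the matter is the evaluation \<open>a\<^sub>N(\<zeta>\<^sub>N\<^sup>t) = a\<^bsub>gcd(N,t)\<^esub>(1)\<close> for every
  divisor \<open>N\<close> of \<open>n\<close>, where \<open>\<zeta>\<^sub>N = exp(2\<pi>i/N)\<close>, proved by strong induction on \<open>N\<close>.
  If \<open>N\<close> does not divide \<open>t\<close>, then \<open>\<zeta>\<^sub>N\<^sup>t\<close> is a root of \<open>[N]\<^sub>q\<close>, so the Euler-Gauss congruence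
  becomes an equality between the products over \<open>\<mu>(d) = 1\<close> and over \<open>\<mu>(d) = -1\<close> of
  \<open>a\<^bsub>N/d\<^esub>(\<zeta>\<^bsub>N/d\<^esub>\<^sup>t)\<close>, and the factors with \<open>d \<noteq> 1\<close> are \<open>a\<^bsub>gcd(N/d,t)\<^esub>(1)\<close> by induction.
  For a prime \<open>p\<close> occurring to a lower power in \<open>t\<close> than in \<open>N\<close>, multiplying or dividing \<open>d\<close>
  by \<open>p\<close> is a bijection between the two index sets that preserves \<open>gcd(N/d,t)\<close>. Hence the
  two products differ only in their factors \<open>a\<^sub>N(\<zeta>\<^sub>N\<^sup>t)\<close> and \<open>a\<^bsub>gcd(N,t)\<^esub>(1)\<close>, and the
  common rest is nonzero: for \<open>\<mu>(d) = 1\<close>, \<open>d \<noteq> 1\<close>, the number \<open>n/gcd(N/d,t)\<close> is divisible by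
  \<open>p\<close> and by another prime factor of \<open>d\<close>, so it is not a prime power. Cyclic sieving is
  the case \<open>N = n\<close>, because \<open>|X\<^sub>n\<^sup>i| = |X\<^bsub>gcd(n,i)\<^esub>| = a\<^bsub>gcd(n,i)\<^esub>(1)\<close>.\<close>

lemma map_poly_of_int_add:
  "map_poly (of_int :: int \<Rightarrow> 'a :: ring_1) (p + q) = map_poly of_int p + map_poly of_int q"
  by (intro poly_eqI) (simp add: coeff_map_poly)

lemma map_poly_of_int_diff:
  "map_poly (of_int :: int \<Rightarrow> 'a :: ring_1) (p - q) = map_poly of_int p - map_poly of_int q"
  by (intro poly_eqI) (simp add: coeff_map_poly)

lemma map_poly_of_int_sum:
  "map_poly (of_int :: int \<Rightarrow> 'a :: ring_1) (\<Sum>i\<in>A. f i) = (\<Sum>i\<in>A. map_poly of_int (f i))"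
  by (induction A rule: infinite_finite_induct) (simp_all add: map_poly_of_int_add)

lemma map_poly_of_int_mult:
  "map_poly (of_int :: int \<Rightarrow> 'a :: comm_ring_1) (p * q) = map_poly of_int p * map_poly of_int q"
  by (intro poly_eqI) (simp add: coeff_map_poly coeff_mult)

lemma map_poly_of_int_prod:
  "map_poly (of_int :: int \<Rightarrow> 'a :: comm_ring_1) (\<Prod>i\<in>A. f i) = (\<Prod>i\<in>A. map_poly of_int (f i))"
  by (induction A rule: infinite_finite_induct) (simp_all add: map_poly_of_int_mult)

lemma map_poly_of_int_pcompose:
  "map_poly (of_int :: int \<Rightarrow> 'a :: comm_ring_1) (pcompose p q) =
     pcompose (map_poly of_int p) (map_poly of_int q)"
proof (induction p)
  case (pCons c p)
  have "map_poly (of_int :: int \<Rightarrow> 'a) [:c:] = [:of_int c:]"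
    by (simp add: map_poly_pCons)
  with pCons show ?case
    by (simp add: pcompose_pCons map_poly_pCons map_poly_of_int_add map_poly_of_int_mult)
qed simp

lemma poly_map_poly_of_int_of_int:
  "poly (map_poly (of_int :: int \<Rightarrow> 'a :: comm_ring_1) p) (of_int x) = of_int (poly p x)"
  by (induction p) (simp_all add: map_poly_pCons)

lemma poly_map_poly_of_int_subst_pow:
  "poly (map_poly (of_int :: int \<Rightarrow> 'a :: comm_ring_1) (subst_pow p d)) z =
     poly (map_poly of_int p) (z ^ d)"
  by (simp add: subst_pow_def map_poly_of_int_pcompose map_poly_monom poly_pcompose poly_monom)

lemma poly_map_poly_of_int_eq_0_if_q_int_dvd:
  fixes z :: "'a :: field"
  assumes "q_int N dvd p" "z ^ N = 1" "z \<noteq> 1"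
  shows "poly (map_poly of_int p) z = 0"
proof -
  obtain r where "p = q_int N * r"
    using assms(1) by blast
  moreover have "poly (map_poly of_int (q_int N)) z = (\<Sum>i<N. z ^ i)"
    by (simp add: q_int_def map_poly_monom poly_monom poly_sum map_poly_of_int_sum)
  moreover have "(\<Sum>i<N. z ^ i) = 0"
    using assms(2,3) by (simp add: geometric_sum)
  ultimately show ?thesis
    by (simp add: map_poly_of_int_mult)
qed

definition prim_root_unity :: "nat \<Rightarrow> complex" where
  "prim_root_unity N = exp (2 * pi * \<i> / of_nat N)"

lemma prim_root_unity_pow:
  "prim_root_unity N ^ t = exp (2 * of_real pi * \<i> * of_nat t / of_nat N)"
  by (simp only: prim_root_unity_def flip: exp_of_nat_mult) (simp add: mult_ac)

lemma prim_root_unity_pow_eq_1_iff: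
  assumes "N > 0"
  shows "prim_root_unity N ^ t = 1 \<longleftrightarrow> N dvd t"
  using assms by (simp add: prim_root_unity_pow complex_root_unity_eq_1)

lemma prim_root_unity_pow_dvd:
  assumes "d dvd N" "N > 0"
  shows "prim_root_unity N ^ d = prim_root_unity (N div d)"
proof -
  obtain k where N: "N = d * k"
    using assms(1) by blast
  then have "d > 0" "k > 0"
    using assms(2) by auto
  then have "exp (2 * of_real pi * \<i> * of_nat d / of_nat N) = prim_root_unity (N div d)"
    by (simp add: N prim_root_unity_def)
  then show ?thesis
    by (simp add: prim_root_unity_pow)
qed

lemma q_euler_gauss_at_prim_root_unity_pow:
  assumes "q_euler_gauss a" "N > 0" "\<not> N dvd t"
  shows "(\<Prod>d\<in>{d. d dvd N \<and> mu d = 1}.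
            poly (map_poly of_int (a (N div d))) (prim_root_unity (N div d) ^ t)) =
         (\<Prod>d\<in>{d. d dvd N \<and> mu d = -1}.
            poly (map_poly of_int (a (N div d))) (prim_root_unity (N div d) ^ t))"
proof -
  define z where "z = prim_root_unity N ^ t"
  have "z ^ N = 1" "z \<noteq> 1"
    using assms(2,3) by (simp_all add: z_def prim_root_unity_pow_eq_1_iff flip: power_mult power_mult_distrib)
  have z_pow: "z ^ d = prim_root_unity (N div d) ^ t" if "d dvd N" for d
    using that assms(2) by (metis z_def power_mult mult.commute prim_root_unity_pow_dvd)
  have "q_int N dvd (\<Prod>d\<in>{d. d dvd N \<and> mu d = 1}. subst_pow (a (N div d)) d)
                    - (\<Prod>d\<in>{d. d dvd N \<and> mu d = -1}. subst_pow (a (N div d)) d)"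
    using assms(1,2) by (simp add: q_euler_gauss_def)
  from poly_map_poly_of_int_eq_0_if_q_int_dvd[OF this \<open>z ^ N = 1\<close> \<open>z \<noteq> 1\<close>]
  have "(\<Prod>d\<in>{d. d dvd N \<and> mu d = 1}. poly (map_poly of_int (a (N div d))) (z ^ d)) =
        (\<Prod>d\<in>{d. d dvd N \<and> mu d = -1}. poly (map_poly of_int (a (N div d))) (z ^ d))"
    by (simp add: map_poly_of_int_diff map_poly_of_int_prod poly_prod poly_map_poly_of_int_subst_pow)
  moreover have "(\<Prod>d\<in>{d. d dvd N \<and> mu d = \<epsilon>}. poly (map_poly of_int (a (N div d))) (z ^ d)) =
      (\<Prod>d\<in>{d. d dvd N \<and> mu d = \<epsilon>}. poly (map_poly of_int (a (N div d))) (prim_root_unity (N div d) ^ t))"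
    for \<epsilon>
    by (intro prod.cong refl) (simp add: z_pow)
  ultimately show ?thesis
    by simp
qed

lemma mu_mult_prime:
  assumes "prime p" "\<not> p dvd e" "squarefree e"
  shows "mu (e * p) = - mu e"
proof -
  have "e \<noteq> 0"
    using assms(3) by (metis not_squarefree_0)
  have "coprime e p"
    using prime_imp_coprime[OF assms(1,2)] by (simp add: ac_simps)
  then have "squarefree (e * p)"
    using assms(1,3) squarefree_prime by (blast intro: squarefree_mult_coprime)
  moreover have "prime_factors (e * p) = insert p (prime_factors e)"
    using \<open>e \<noteq> 0\<close> assms(1) by (auto simp: prime_factors_product prime_prime_factors)
  moreover have "p \<notin> prime_factors e"
    using assms(2) by auto
  ultimately show ?thesis
    using assms(3) by (simp add: mu_def)
qed

definition toggle_prime :: "nat \<Rightarrow> nat \<Rightarrow> nat" where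
  "toggle_prime p e = (if p dvd e then e div p else e * p)"

lemma toggle_prime_cases:
  assumes "prime p" "squarefree e"
  obtains (times_p) e0 where "\<not> p dvd e0" "squarefree e0" "e = e0" "toggle_prime p e = e0 * p"
        | (div_p) e0 where "\<not> p dvd e0" "squarefree e0" "e = e0 * p" "toggle_prime p e = e0"
proof (cases "p dvd e")
  case True
  then obtain e0 where e: "e = e0 * p"
    by (metis dvd_div_mult_self)
  have "\<not> p dvd e0"
  proof
    assume "p dvd e0"
    then have "p ^ 2 dvd e"
      by (simp add: e power2_eq_square)
    then show False
      using assms squarefreeD[of e p] by auto
  qed
  moreover have "squarefree e0"
    using assms(2) squarefree_multD(1) unfolding e by blast
  moreover have "toggle_prime p e = e0"
    using assms(1) True by (simp add: toggle_prime_def e prime_gt_0_nat)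
  ultimately show ?thesis
    using div_p e by blast
next
  case False
  then show ?thesis
    using times_p assms(2) by (simp add: toggle_prime_def)
qed

lemma toggle_prime_toggle_prime:
  assumes "prime p" "squarefree e"
  shows "toggle_prime p (toggle_prime p e) = e"
  using assms by (cases rule: toggle_prime_cases) (auto simp: toggle_prime_def prime_gt_0_nat assms(1))

lemma mu_toggle_prime:
  assumes "prime p" "squarefree e"
  shows "mu (toggle_prime p e) = - mu e"
  using assms by (cases rule: toggle_prime_cases) (simp_all add: mu_mult_prime assms(1))

lemma toggle_prime_dvd:
  assumes "prime p" "squarefree e" "p dvd N" "e dvd N"
  shows "toggle_prime p e dvd N"
  using assms(1,2)
proof (cases rule: toggle_prime_cases)
  case (times_p e0)
  then have "coprime e0 p"
    using prime_imp_coprime[OF assms(1)] by (simp add: ac_simps)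
  with times_p assms(3,4) show ?thesis
    by (simp add: divides_mult)
next
  case (div_p e0)
  with assms(4) show ?thesis
    by (simp add: dvd_mult_left)
qed

lemma squarefree_if_mu_neq_0: "mu d \<noteq> 0 \<Longrightarrow> squarefree d"
  by (simp add: mu_def split: if_splits)

lemma bij_betw_toggle_prime_mu:
  assumes "prime p" "p dvd N"
  shows "bij_betw (toggle_prime p) {d. d dvd N \<and> mu d = 1} {d. d dvd N \<and> mu d = -1}"
proof (rule bij_betw_byWitness[where f' = "toggle_prime p"])
  have toggle_mem: "toggle_prime p d \<in> {d. d dvd N \<and> mu d = - \<epsilon>}"
    if "d \<in> {d. d dvd N \<and> mu d = \<epsilon>}" "\<epsilon> \<noteq> 0" for d \<epsilon>
    using that assms squarefree_if_mu_neq_0[of d] by (auto simp: toggle_prime_dvd mu_toggle_prime)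
  show "toggle_prime p ` {d. d dvd N \<and> mu d = 1} \<subseteq> {d. d dvd N \<and> mu d = -1}"
    using toggle_mem[of _ 1] by auto
  show "toggle_prime p ` {d. d dvd N \<and> mu d = -1} \<subseteq> {d. d dvd N \<and> mu d = 1}"
    using toggle_mem[of _ "-1"] by auto
  show "\<forall>d\<in>{d. d dvd N \<and> mu d = 1}. toggle_prime p (toggle_prime p d) = d"
       "\<forall>d\<in>{d. d dvd N \<and> mu d = -1}. toggle_prime p (toggle_prime p d) = d"
    using assms(1) squarefree_if_mu_neq_0 by (auto simp: toggle_prime_toggle_prime)
qed

lemma prod_mu_eq_1_eq_prod_mu_eq_neg_1:
  assumes "prime p" "p dvd N"
    and "\<And>d. d dvd N \<Longrightarrow> squarefree d \<Longrightarrow> h (toggle_prime p d) = h d"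
  shows "(\<Prod>d\<in>{d. d dvd N \<and> mu d = 1}. h d) = (\<Prod>d\<in>{d. d dvd N \<and> mu d = -1}. h d)"
proof -
  have "(\<Prod>d\<in>{d. d dvd N \<and> mu d = -1}. h d) = (\<Prod>d\<in>{d. d dvd N \<and> mu d = 1}. h (toggle_prime p d))"
    by (rule prod.reindex_bij_betw[OF bij_betw_toggle_prime_mu[OF assms(1,2)], symmetric])
  also have "\<dots> = (\<Prod>d\<in>{d. d dvd N \<and> mu d = 1}. h d)"
    using assms(3) squarefree_if_mu_neq_0 by (intro prod.cong) auto
  finally show ?thesis
    by simp
qed

lemma gcd_prime_mult_eq:
  fixes p K t :: nat
  assumes "prime p" "t \<noteq> 0" "multiplicity p t \<le> multiplicity p K"
  shows "gcd (p * K) t = gcd K t"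
proof (cases "K = 0")
  case False
  have "normalize (gcd (p * K) t) = normalize (gcd K t)"
  proof (rule multiplicity_eq_imp_eq)
    fix q :: nat
    assume q: "prime q"
    show "multiplicity q (gcd (p * K) t) = multiplicity q (gcd K t)"
    proof (cases "q = p")
      case True
      have "multiplicity p (p * K) = Suc (multiplicity p K)"
        using assms(1) \<open>K \<noteq> 0\<close> by (intro multiplicity_times_same) auto
      with True show ?thesis
        using assms False by (simp add: multiplicity_gcd)
    next
      case False
      then have "multiplicity q (p * K) = multiplicity q K"
        using assms(1) q \<open>K \<noteq> 0\<close>
        by (simp add: prime_elem_multiplicity_mult_distrib prime_multiplicity_other prime_gt_0_nat)
      then show ?thesis
        using assms(1,2) q \<open>K \<noteq> 0\<close> by (simp add: multiplicity_gcd prime_gt_0_nat)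
    qed
  qed (use assms(2) in simp_all)
  then show ?thesis
    by simp
qed simp

lemma gcd_div_mult_prime_eq:
  fixes p N e t :: nat
  assumes "prime p" "t \<noteq> 0" "multiplicity p t < multiplicity p N" "\<not> p dvd e" "e * p dvd N"
  shows "gcd (N div (e * p)) t = gcd (N div e) t"
proof -
  obtain K where N: "N = e * p * K"
    using assms(5) by blast
  have "N \<noteq> 0"
  proof
    assume "N = 0"
    with assms(3) show False
      by simp
  qed
  then have "e \<noteq> 0" "K \<noteq> 0"
    by (auto simp: N)
  then have "multiplicity p N = Suc (multiplicity p K)"
    using assms(1,4)
    by (simp add: N prime_elem_multiplicity_mult_distrib not_dvd_imp_multiplicity_0 prime_gt_0_nat)
  then have "gcd (p * K) t = gcd K t"
    using assms(1-3) by (intro gcd_prime_mult_eq) simp_all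
  then show ?thesis
    using \<open>e \<noteq> 0\<close> assms(1) by (simp add: N prime_gt_0_nat mult.assoc)
qed

lemma gcd_div_toggle_prime:
  fixes p N e t :: nat
  assumes "prime p" "t \<noteq> 0" "multiplicity p t < multiplicity p N" "squarefree e" "e dvd N"
  shows "gcd (N div toggle_prime p e) t = gcd (N div e) t"
proof -
  have "p dvd N"
    using assms(1,3) by (metis not_dvd_imp_multiplicity_0 not_less0)
  then have toggle_dvd: "toggle_prime p e dvd N"
    using assms(1,4,5) by (intro toggle_prime_dvd)
  from assms(1,4) show ?thesis
  proof (cases rule: toggle_prime_cases)
    case (times_p e0)
    with assms toggle_dvd gcd_div_mult_prime_eq[of p t N e0] show ?thesis
      by simp
  next
    case (div_p e0)
    with assms gcd_div_mult_prime_eq[of p t N e0] show ?thesis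
      by simp
  qed
qed

lemma not_prime_power_or_one_if_two_prime_divisors:
  assumes "prime p" "prime q" "p \<noteq> q" "p dvd m" "q dvd m" "m \<noteq> 0"
  shows "\<not> prime_power_or_one m"
proof -
  have "{p, q} \<subseteq> prime_factors m"
    using assms by (auto simp: prime_factors_dvd)
  then have "card {p, q} \<le> card (prime_factors m)"
    by (intro card_mono) auto
  with assms(3) show ?thesis
    by (simp add: prime_power_or_one_def)
qed

lemma two_le_card_prime_factors_if_mu_eq_1:
  assumes "mu e = 1" "e \<noteq> 1"
  shows "2 \<le> card (prime_factors e)"
proof -
  have "squarefree e" "even (card (prime_factors e))"
    using assms(1) by (auto simp: mu_def minus_one_power_iff split: if_splits)
  obtain q where "prime q" "q dvd e"
    using prime_factor_nat[OF assms(2)] by blast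
  moreover have "e \<noteq> 0"
    using \<open>squarefree e\<close> by (metis not_squarefree_0)
  ultimately have "q \<in> prime_factors e"
    by (auto simp: prime_factors_dvd)
  then have "card (prime_factors e) \<noteq> 0"
    by auto
  with \<open>even (card (prime_factors e))\<close> show ?thesis
    by presburger
qed

lemma not_prime_power_or_one_div_gcd:
  fixes n N e t p :: nat
  assumes "n \<noteq> 0" "N dvd n" "e dvd N" "mu e = 1" "e \<noteq> 1"
    and "prime p" "t \<noteq> 0" "multiplicity p t < multiplicity p N"
  shows "\<not> prime_power_or_one (n div gcd (N div e) t)"
proof -
  define g where "g = gcd (N div e) t"
  define m where "m = n div g"
  have "g \<noteq> 0"
    using assms(7) by (simp add: g_def)
  have "e * g dvd e * (N div e)"
    by (simp add: g_def)
  then have "e * g dvd n"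
    using assms(2,3) by (simp add: dvd_trans)
  then have "g dvd n" "e dvd m"
    using \<open>g \<noteq> 0\<close> by (auto simp: m_def dvd_div_iff_mult intro: dvd_mult_right)
  then have n: "n = g * m" and "m \<noteq> 0"
    using assms(1) by (auto simp: m_def)
  obtain q where q: "prime q" "q dvd e" "q \<noteq> p"
  proof -
    have "\<not> prime_factors e \<subseteq> {p}"
      using two_le_card_prime_factors_if_mu_eq_1[OF assms(4,5)] card_mono[of "{p}" "prime_factors e"]
      by auto
    then show ?thesis
      using that by auto
  qed
  have "multiplicity p g \<le> multiplicity p t"
    using assms(7) by (intro dvd_imp_multiplicity_le) (simp_all add: g_def)
  also have "\<dots> < multiplicity p N"
    by (fact assms(8))
  also have "\<dots> \<le> multiplicity p n"
    using assms(1,2) by (intro dvd_imp_multiplicity_le)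
  also have "\<dots> = multiplicity p g + multiplicity p m"
    using \<open>g \<noteq> 0\<close> \<open>m \<noteq> 0\<close> assms(6) by (simp add: n prime_elem_multiplicity_mult_distrib)
  finally have "p dvd m"
    using assms(6) \<open>m \<noteq> 0\<close> by (simp flip: prime_multiplicity_gt_zero_iff)
  then show ?thesis
    using not_prime_power_or_one_if_two_prime_divisors[OF assms(6) q(1) not_sym[OF q(3)]]
      q(2) \<open>e dvd m\<close> \<open>m \<noteq> 0\<close>
    unfolding m_def g_def by (blast intro: dvd_trans)
qed

lemma div_dvd_self:
  fixes a b :: "'a :: algebraic_semidom"
  assumes "b dvd a"
  shows "a div b dvd a"
  using assms by (metis dvd_div_mult_self dvd_triv_left)

lemma prime_multiplicity_less_if_not_dvd:
  fixes N t :: nat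
  assumes "N \<noteq> 0" "\<not> N dvd t"
  obtains p where "prime p" "multiplicity p t < multiplicity p N"
  using assms multiplicity_le_imp_dvd[of N t] by (meson not_le)

lemma q_euler_gauss_poly_prim_root_unity_pow_step:
  fixes a :: "nat \<Rightarrow> int poly"
  assumes EG: "q_euler_gauss a" and "N > 0" "\<not> N dvd t"
    and p: "prime p" "multiplicity p t < multiplicity p N"
    and IH: "\<And>d. d dvd N \<Longrightarrow> d \<noteq> 1 \<Longrightarrow>
      poly (map_poly of_int (a (N div d))) (prim_root_unity (N div d) ^ t) =
        of_int (poly (a (gcd (N div d) t)) 1)"
    and nonzero: "\<And>d. d dvd N \<Longrightarrow> mu d = 1 \<Longrightarrow> d \<noteq> 1 \<Longrightarrow> poly (a (gcd (N div d) t)) 1 \<noteq> 0"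
  shows "poly (map_poly of_int (a N)) (prim_root_unity N ^ t) = of_int (poly (a (gcd N t)) 1)"
proof -
  define F where "F d = poly (map_poly of_int (a (N div d))) (prim_root_unity (N div d) ^ t)" for d
  define H where "H d = (of_int (poly (a (gcd (N div d) t)) 1) :: complex)" for d
  define Splus where "Splus = {d. d dvd N \<and> mu d = 1}"
  define Sminus where "Sminus = {d. d dvd N \<and> mu d = -1}"
  have "t \<noteq> 0" "p dvd N"
    using assms(3) p by (metis dvd_0_right, metis not_dvd_imp_multiplicity_0 not_less0)
  have "finite Splus" "1 \<in> Splus" "1 \<notin> Sminus"
    using \<open>N > 0\<close> by (auto simp: Splus_def Sminus_def mu_def)
  have "(\<Prod>d\<in>Splus - {1}. F d) = (\<Prod>d\<in>Splus - {1}. H d)"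
    using IH by (intro prod.cong) (auto simp: Splus_def F_def H_def)
  then have "F 1 * (\<Prod>d\<in>Splus - {1}. H d) = (\<Prod>d\<in>Splus. F d)"
    using prod.remove[OF \<open>finite Splus\<close> \<open>1 \<in> Splus\<close>, of F] by simp
  also have "\<dots> = (\<Prod>d\<in>Sminus. F d)"
    unfolding F_def Splus_def Sminus_def by (rule q_euler_gauss_at_prim_root_unity_pow[OF EG assms(2,3)])
  also have "\<dots> = (\<Prod>d\<in>Sminus. H d)"
    using \<open>1 \<notin> Sminus\<close> IH by (intro prod.cong) (auto simp: Sminus_def F_def H_def)
  also have "\<dots> = (\<Prod>d\<in>Splus. H d)"
    unfolding Splus_def Sminus_def H_def
    using p \<open>t \<noteq> 0\<close> \<open>p dvd N\<close> gcd_div_toggle_prime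
    by (intro prod_mu_eq_1_eq_prod_mu_eq_neg_1[symmetric]) auto
  also have "\<dots> = H 1 * (\<Prod>d\<in>Splus - {1}. H d)"
    using \<open>finite Splus\<close> \<open>1 \<in> Splus\<close> by (rule prod.remove)
  finally have "F 1 = H 1"
    using nonzero \<open>finite Splus\<close> by (simp add: prod_zero_iff Splus_def H_def)
  then show ?thesis
    by (simp add: F_def H_def)
qed

theorem q_euler_gauss_poly_prim_root_unity_pow:
  fixes a :: "nat \<Rightarrow> int poly"
  assumes EG: "q_euler_gauss a" and "n \<noteq> 0"
    and nz: "\<And>d. d dvd n \<Longrightarrow> \<not> prime_power_or_one (n div d) \<Longrightarrow> poly (a d) 1 \<noteq> 0"
    and "N dvd n"
  shows "poly (map_poly of_int (a N)) (prim_root_unity N ^ t) = of_int (poly (a (gcd N t)) 1)"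
  using assms(4)
proof (induction N arbitrary: t rule: less_induct)
  case (less N)
  have "N > 0"
    using less.prems \<open>n \<noteq> 0\<close> by (auto intro: gr0I)
  show ?case
  proof (cases "N dvd t")
    case True
    then have "prim_root_unity N ^ t = 1"
      using \<open>N > 0\<close> by (simp add: prim_root_unity_pow_eq_1_iff)
    with True show ?thesis
      using poly_map_poly_of_int_of_int[where 'a = complex, of "a N" 1] by (simp add: gcd_nat.absorb1)
  next
    case False
    then have "t \<noteq> 0"
      by (metis dvd_0_right)
    obtain p where p: "prime p" "multiplicity p t < multiplicity p N"
      using False \<open>N > 0\<close> prime_multiplicity_less_if_not_dvd by blast
    show ?thesis
    proof (rule q_euler_gauss_poly_prim_root_unity_pow_step[OF EG \<open>N > 0\<close> False p])
      fix d
      assume "d dvd N"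
      then have "N div d dvd n" "gcd (N div d) t dvd n"
        using less.prems by (meson dvd_trans div_dvd_self gcd_dvd1)+
      show "poly (a (gcd (N div d) t)) 1 \<noteq> 0" if "mu d = 1" "d \<noteq> 1"
        using not_prime_power_or_one_div_gcd[OF \<open>n \<noteq> 0\<close> less.prems \<open>d dvd N\<close> that p(1) \<open>t \<noteq> 0\<close> p(2)]
          \<open>gcd (N div d) t dvd n\<close> nz by blast
      show "poly (map_poly of_int (a (N div d))) (prim_root_unity (N div d) ^ t) =
          of_int (poly (a (gcd (N div d) t)) 1)" if "d \<noteq> 1"
        using \<open>d dvd N\<close> that \<open>N > 0\<close> \<open>N div d dvd n\<close> by (intro less.IH div_less_dividend) auto
    qed
  qed
qed

theorem corollary2:
  fixes X :: "nat \<Rightarrow> 'b set" and a :: "nat \<Rightarrow> int poly" and n :: nat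
    and phi :: "int \<Rightarrow> 'b \<Rightarrow> 'b"
  assumes fin: "\<And>m. m \<ge> 1 \<Longrightarrow> finite (X m)"
    and EG: "q_euler_gauss a"
    and n: "n \<ge> 1"
    and nz: "\<And>d. d dvd n \<Longrightarrow> \<not> prime_power_or_one (n div d) \<Longrightarrow> poly (a d) 1 \<noteq> 0"
    and hcard: "\<And>d. d dvd n \<Longrightarrow> int (card (X d)) = poly (a d) 1"
    and act: "group_action (integer_mod_group n) (X n) phi"
    and fixpt: "\<And>i. i \<in> carrier (integer_mod_group n) \<Longrightarrow>
                card (fixpts (X n) phi i) = card (X (nat (gcd (int n) i)))"
  shows "cyclic_sieving (X n) n phi (a n)"
  unfolding cyclic_sieving_def
proof
  fix i
  assume i: "i \<in> carrier (integer_mod_group n)"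
  define t where "t = nat i"
  have t: "i = int t"
    using i n by (simp add: t_def carrier_integer_mod_group)
  have "card (fixpts (X n) phi i) = card (X (gcd n t))"
    using fixpt[OF i] by (simp add: t gcd_int_int_eq)
  also have "int \<dots> = poly (a (gcd n t)) 1"
    by (simp add: hcard)
  finally have "complex_of_nat (card (fixpts (X n) phi i)) = of_int (poly (a (gcd n t)) 1)"
    by (metis of_int_of_nat_eq)
  also have "\<dots> = poly (map_poly of_int (a n)) (prim_root_unity n ^ t)"
    using n by (intro q_euler_gauss_poly_prim_root_unity_pow[OF EG _ nz, symmetric]) auto
  finally show "complex_of_nat (card (fixpts (X n) phi i)) =
      poly (map_poly of_int (a n)) (exp (2 * pi * \<i> / of_nat n) ^ nat i)"
    by (simp add: t prim_root_unity_def)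
qed

end
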